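(* Let $H\sim\mathcal{N}(0,\Sigma)$ be a random $M\times N$ matrix, and let $Q^{(1)},Q^{(2)}$ be two capacity-achieving covariance matrices (both maximizers of $C$ over $\{Q\ge0,\ \mathrm{tr}(Q)\le p\}$) with $\mathrm{tr}(Q^{(1)})=p=\mathrm{tr}(Q^{(2)})$. Then $HQ^{(1)}H^H=HQ^{(2)}H^H$ almost surely with respect to the law of $H$.
   Context: Fix integers $M,N\ge1$, noise variance $\sigma_n^2>0$ and power $p>0$. We identify $\mathbb{M}(M,\mathbb{C})\otimes\mathbb{M}(N,\mathbb{C})$ with $\mathbb{M}(MN,\mathbb{C})$ via $(A\otimes B)_{(i,j),(l,m)}=A_{il}B_{jm}$. $H\sim\mathcal{N}(0,\Sigma)$ means: $H$ is a random $M\times N$ complex matrix whose entries are jointly zero-mean circularly symmetric complex Gaussian, with covariance $\Sigma_{(i,j),(l,m)}=\mathcal{E}(H_{ij}\overline{H_{lm}})$. For positive semidefinite $Q\in\mathbb{M}(N,\mathbb{C})$, $C(Q):=\mathcal{E}\big(\log\det(\mathbf{1}_M+\sigma_n^{-2}HQH^H)\big)$. *)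

theory Defs
  imports "HOL-Probability.Probability"
begin

definition mat_adj :: "complex^'n^'m \<Rightarrow> complex^'m^'n" where
  "mat_adj A = (\<chi> i j. cnj (A $ j $ i))"

definition mtrace :: "complex^'n^'n \<Rightarrow> complex" where
  "mtrace A = (\<Sum>i\<in>UNIV. A $ i $ i)"

definition cpsd :: "complex^'n^'n \<Rightarrow> bool" where
  "cpsd A \<longleftrightarrow> mat_adj A = A \<and>
     (\<forall>x::complex^'n. 0 \<le> Re (\<Sum>i\<in>UNIV. \<Sum>j\<in>UNIV. cnj (x $ i) * A $ i $ j * x $ j))"

definition cov_psd :: "('m::finite \<times> 'n::finite \<Rightarrow> 'm \<times> 'n \<Rightarrow> complex) \<Rightarrow> bool" where
  "cov_psd S \<longleftrightarrow> (\<forall>k l. S l k = cnj (S k l)) \<and>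
     (\<forall>a. 0 \<le> Re (\<Sum>k\<in>UNIV. \<Sum>l\<in>UNIV. cnj (a k) * S k l * a l))"

text \<open>The law of a zero-mean circularly symmetric complex Gaussian random M x N matrix
  with covariance S (S (i,j) (l,m) = E(H_ij conj H_lm)), given by its characteristic
  function: E exp(i Re(a^H h)) = exp(-a^H S a / 4).\<close>
definition cscg_law :: "(complex^'n::finite^'m::finite) measure \<Rightarrow>
     ('m \<times> 'n \<Rightarrow> 'm \<times> 'n \<Rightarrow> complex) \<Rightarrow> bool" where
  "cscg_law \<mu> S \<longleftrightarrow> prob_space \<mu> \<and> sets \<mu> = sets borel \<and>
     (\<forall>a::complex^'n^'m.
        integral\<^sup>L \<mu> (\<lambda>H. exp (\<i> * complex_of_real
            (Re (\<Sum>i\<in>UNIV. \<Sum>j\<in>UNIV. cnj (a $ i $ j) * H $ i $ j))))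
        = exp (- (\<Sum>k\<in>UNIV. \<Sum>l\<in>UNIV. cnj (a $ fst k $ snd k) * S k l * a $ fst l $ snd l) / 4))"

definition capacity :: "(complex^'n::finite^'m::finite) measure \<Rightarrow> real \<Rightarrow> complex^'n^'n \<Rightarrow> real" where
  "capacity \<mu> s2 Q = (\<integral>H. ln (Re (det (mat 1 + (1 / s2) *\<^sub>R (H ** Q ** mat_adj H)))) \<partial>\<mu>)"

definition capacity_achieving ::
  "(complex^'n::finite^'m::finite) measure \<Rightarrow> real \<Rightarrow> real \<Rightarrow> complex^'n^'n \<Rightarrow> bool" where
  "capacity_achieving \<mu> s2 p Q \<longleftrightarrow> cpsd Q \<and> Re (mtrace Q) \<le> p \<and>
     (\<forall>Q'. cpsd Q' \<and> Re (mtrace Q') \<le> p \<longrightarrow> capacity \<mu> s2 Q' \<le> capacity \<mu> s2 Q)"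

end

theory Submission
  imports Defs
begin

(* The midpoint Q3 = (Q1 + Q2)/2 is feasible because the trace constraint is linear, so
   C(Q3) <= C(Q1) = C(Q2).  For a fixed channel realisation H write
   r Q = log det (I + H Q H^H / sigma^2).  Strict log-concavity of the determinant on positive
   definite matrices gives 2 r Q3 - r Q1 - r Q2 >= 0, with equality only if
   H Q1 H^H = H Q2 H^H.  This nonnegative function has expectation
   2 C(Q3) - C(Q1) - C(Q2) <= 0, so it vanishes almost surely.

   Strict log-concavity: a unit triangular congruence (Gram-Schmidt for the form of the
   midpoint) makes the midpoint diagonal without changing determinants; then Hadamard's
   inequality, with its equality case, and AM-GM on the diagonal entries finish the argument.
   The expectations exist because 0 <= r Q <= tr (H Q H^H) / sigma^2 <= c |H|^2, and the
   entries of a Gaussian matrix have finite second moments. *)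

section \<open>Sesquilinear forms of complex matrices\<close>

definition cform :: "complex^'n^'n \<Rightarrow> complex^'n \<Rightarrow> complex^'n \<Rightarrow> complex" where
  "cform X x y = (\<Sum>i\<in>UNIV. \<Sum>j\<in>UNIV. cnj (x $ i) * X $ i $ j * y $ j)"

definition pos_def :: "complex^'n^'n \<Rightarrow> bool" where
  "pos_def X \<longleftrightarrow> mat_adj X = X \<and> (\<forall>x. x \<noteq> 0 \<longrightarrow> 0 < Re (cform X x x))"

lemma cpsd_iff_cform: "cpsd A \<longleftrightarrow> mat_adj A = A \<and> (\<forall>x. 0 \<le> Re (cform A x x))"
  unfolding cpsd_def cform_def ..

lemma mat_adj_mat_adj [simp]: "mat_adj (mat_adj A) = A"
  by (simp add: mat_adj_def vec_eq_iff)

lemma mat_adj_add: "mat_adj (A + B) = mat_adj A + mat_adj B"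
  by (simp add: mat_adj_def vec_eq_iff)

lemma mat_adj_scaleR: "mat_adj (c *\<^sub>R A) = c *\<^sub>R mat_adj A"
  by (simp add: mat_adj_def vec_eq_iff)

lemma mat_adj_mult: "mat_adj (A ** B) = mat_adj B ** mat_adj A"
  by (simp add: mat_adj_def vec_eq_iff matrix_matrix_mult_def mult.commute)

lemma mat_adj_id [simp]: "mat_adj (mat 1) = mat 1"
  by (simp add: mat_adj_def mat_def vec_eq_iff)

lemma det_mat_adj: "det (mat_adj A) = cnj (det A)"
proof -
  have "mat_adj A = transpose (\<chi> i j. cnj (A $ i $ j))"
    by (simp add: mat_adj_def transpose_def)
  then have "det (mat_adj A) = det (\<chi> i j. cnj (A $ i $ j))"
    by (simp only: det_transpose)
  then show ?thesis
    by (simp add: det_def)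
qed

lemma cform_add_left: "cform X (x + y) z = cform X x z + cform X y z"
  by (simp add: cform_def algebra_simps sum.distrib)

lemma cform_add_right: "cform X x (y + z) = cform X x y + cform X x z"
  by (simp add: cform_def algebra_simps sum.distrib)

lemma cform_diff_right: "cform X x (y - z) = cform X x y - cform X x z"
  by (simp add: cform_def algebra_simps sum_subtractf)

lemma cform_scale_right: "cform X x (c *s y) = c * cform X x y"
  by (simp add: cform_def sum_distrib_left mult_ac)

lemma cform_sum_right: "cform X x (\<Sum>a\<in>A. f a) = (\<Sum>a\<in>A. cform X x (f a))"
  by (induction A rule: infinite_finite_induct) (simp_all add: cform_add_right cform_def[of X x 0])

lemma cform_mat_add: "cform (X + Y) x y = cform X x y + cform Y x y"
  by (simp add: cform_def algebra_simps sum.distrib)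

lemma cform_mat_scaleR: "cform (c *\<^sub>R X) x y = of_real c * cform X x y"
  unfolding cform_def vector_scaleR_component
  by (simp add: sum_distrib_left scaleR_conv_of_real mult_ac)

lemma Re_cform_id: "Re (cform (mat 1) x x) = (\<Sum>i\<in>UNIV. (cmod (x $ i))\<^sup>2)"
proof -
  have "cnj (x $ i) * mat 1 $ i $ j * x $ j = (if i = j then cnj (x $ i) * x $ i else 0)" for i j
    by (simp add: mat_def)
  then have "cform (mat 1) x x = (\<Sum>i\<in>UNIV. cnj (x $ i) * x $ i)"
    by (simp add: cform_def)
  then show ?thesis
    by (simp add: cmod_power2 flip: power2_eq_square)
qed

lemma cform_axis: "cform X (axis i 1) (axis j 1) = X $ i $ j"
proof -
  have "cnj (axis i 1 $ a) * X $ a $ b * axis j 1 $ b = (if b = j then if a = i then X $ a $ b else 0 else 0)"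
    for a b by (simp add: axis_def)
  then show ?thesis
    by (simp add: cform_def)
qed

lemma cform_mat_adj: "cform (mat_adj X) y x = cnj (cform X x y)"
  unfolding cform_def mat_adj_def
  by (subst sum.swap) (simp add: mult_ac)

lemma cform_mult_vector: "cform X x y = (\<Sum>i\<in>UNIV. cnj (x $ i) * (X *v y) $ i)"
  by (simp add: cform_def matrix_vector_mult_def sum_distrib_left mult.assoc)

lemma sum_cnj_mat_adj_vector:
  "(\<Sum>i\<in>UNIV. cnj (x $ i) * (mat_adj T *v z) $ i) = (\<Sum>j\<in>UNIV. cnj ((T *v x) $ j) * z $ j)"
  unfolding mat_adj_def matrix_vector_mult_def
  by (simp add: sum_distrib_left sum_distrib_right, subst sum.swap) (simp add: mult_ac)

lemma cform_congruence: "cform (mat_adj T ** X ** T) x y = cform X (T *v x) (T *v y)"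
  by (simp add: cform_mult_vector matrix_vector_mul_assoc[symmetric] sum_cnj_mat_adj_vector)

lemma cform_hermitian: "mat_adj X = X \<Longrightarrow> cform X y x = cnj (cform X x y)"
  using cform_mat_adj[of X y x] by simp

lemma cform_self_real: "mat_adj X = X \<Longrightarrow> of_real (Re (cform X x x)) = cform X x x"
  using cform_hermitian[of X x x] by (simp add: Reals_cnj_iff)

lemma hermitian_diag_real: "mat_adj X = X \<Longrightarrow> of_real (Re (X $ a $ a)) = X $ a $ a"
  using cform_self_real[of X "axis a 1"] by (simp add: cform_axis)

lemma cform_add_orthogonal:
  assumes "mat_adj X = X" and "cform X u w = 0"
  shows "cform X (u + w) (u + w) = cform X u u + cform X w w"
proof -
  have "cform X w u = 0"
    using cform_hermitian[OF assms(1), of u w] assms(2) by simp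
  then show ?thesis
    using assms(2) by (simp add: cform_add_left cform_add_right)
qed

lemma mat_eq_if_cform_eq: "(\<And>x y. cform X x y = cform Y x y) \<Longrightarrow> X = Y"
  by (simp add: vec_eq_iff flip: cform_axis)

lemma pos_def_cform_nonzero: "pos_def X \<Longrightarrow> x \<noteq> 0 \<Longrightarrow> cform X x x \<noteq> 0"
  unfolding pos_def_def by force

lemma pos_def_diag_pos: "pos_def X \<Longrightarrow> 0 < Re (X $ a $ a)"
  unfolding pos_def_def by (simp flip: cform_axis)

lemma pos_def_congruence:
  fixes X T :: "complex^'n^'n"
  assumes X: "pos_def X" and T: "invertible T"
  shows "pos_def (mat_adj T ** X ** T)"
  unfolding pos_def_def
proof (intro conjI allI impI)
  show "mat_adj (mat_adj T ** X ** T) = mat_adj T ** X ** T"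
    using X by (simp add: pos_def_def mat_adj_mult matrix_mul_assoc)
  fix x :: "complex^'n" assume "x \<noteq> 0"
  then have "T *v x \<noteq> 0"
    using T by (metis invertible_left_inverse matrix_left_invertible_ker)
  then show "0 < Re (cform (mat_adj T ** X ** T) x x)"
    using X by (simp add: pos_def_def cform_congruence)
qed

lemma pos_def_midpoint:
  assumes "pos_def P" and "pos_def Q"
  shows "pos_def ((1/2) *\<^sub>R (P + Q))"
  using assms unfolding pos_def_def
  by (simp add: mat_adj_scaleR mat_adj_add cform_mat_scaleR cform_mat_add add_pos_pos)

lemma pos_def_id_plus_psd:
  assumes "cpsd A"
  shows "pos_def (mat 1 + A)"
  unfolding pos_def_def
proof (intro conjI allI impI)
  show "mat_adj (mat 1 + A) = mat 1 + A"
    using assms by (simp add: cpsd_def mat_adj_add)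
  fix x :: "complex^'a" assume "x \<noteq> 0"
  then obtain i where "x $ i \<noteq> 0"
    by (metis vec_eq_iff zero_index)
  then have "0 < (\<Sum>i\<in>UNIV. (cmod (x $ i))\<^sup>2)"
    by (intro sum_pos2[of UNIV i]) auto
  moreover have "0 \<le> Re (cform A x x)"
    using assms by (simp add: cpsd_iff_cform)
  ultimately show "0 < Re (cform (mat 1 + A) x x)"
    by (simp add: cform_mat_add Re_cform_id)
qed

section \<open>Unit triangular congruence and Hadamard's inequality\<close>

(* t a is the unit vector at g a minus its X-projections onto t 0, ..., t (a - 1); the last
   conjunct says that the subtracted part is X-orthogonal to t a. *)
lemma gram_schmidt:
  fixes X :: "complex^'m^'m" and g :: "nat \<Rightarrow> 'm"
  assumes X: "pos_def X" and g: "inj_on g {..<k}"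
  shows "\<exists>t. (\<forall>a<k. t a $ g a = 1) \<and> (\<forall>a<k. \<forall>b. t a $ b \<noteq> 0 \<longrightarrow> b \<in> g ` {..a}) \<and>
    (\<forall>a<k. \<forall>a'<k. a \<noteq> a' \<longrightarrow> cform X (t a) (t a') = 0) \<and>
    (\<forall>a<k. cform X (t a) (axis (g a) 1 - t a) = 0)"
  using g
proof (induction k)
  case 0
  show ?case by simp
next
  case (Suc k)
  have "inj_on g {..<k}"
    using Suc.prems by (rule inj_on_subset) auto
  obtain t where diag: "\<forall>a<k. t a $ g a = 1"
    and supp: "\<forall>a<k. \<forall>b. t a $ b \<noteq> 0 \<longrightarrow> b \<in> g ` {..a}"
    and orth: "\<forall>a<k. \<forall>a'<k. a \<noteq> a' \<longrightarrow> cform X (t a) (t a') = 0"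
    and rest: "\<forall>a<k. cform X (t a) (axis (g a) 1 - t a) = 0"
    using Suc.IH[OF \<open>inj_on g {..<k}\<close>] by (elim exE conjE)
  have herm: "mat_adj X = X"
    using X by (simp add: pos_def_def)
  define c where "c a = cform X (t a) (axis (g k) 1) / cform X (t a) (t a)" for a
  define tk where "tk = axis (g k) 1 - (\<Sum>a<k. c a *s t a)"
  have nonzero: "cform X (t a) (t a) \<noteq> 0" if "a < k" for a
  proof -
    have "t a \<noteq> 0"
      using diag that by (metis zero_index zero_neq_one)
    then show ?thesis
      by (rule pos_def_cform_nonzero[OF X])
  qed
  have orth_tk: "cform X (t a) tk = 0" if a: "a < k" for a
  proof -
    have "(\<Sum>a'<k. c a' * cform X (t a) (t a')) =
        (\<Sum>a'<k. if a' = a then c a * cform X (t a) (t a) else 0)"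
      using orth a by (intro sum.cong) auto
    also have "\<dots> = c a * cform X (t a) (t a)"
      using a by simp
    finally show ?thesis
      using nonzero[OF a] by (simp add: tk_def c_def cform_diff_right cform_sum_right cform_scale_right)
  qed
  have tk_supp: "b \<in> g ` {..k}" if nz: "tk $ b \<noteq> 0" for b
  proof (rule ccontr)
    assume b: "b \<notin> g ` {..k}"
    then have "t a $ b = 0" if "a < k" for a
      using supp that by fastforce
    moreover have "b \<noteq> g k"
      using b by auto
    ultimately have "tk $ b = 0"
      by (simp add: tk_def axis_def)
    with nz show False ..
  qed
  have tk_diag: "tk $ g k = 1"
  proof -
    have "g k \<notin> g ` {..a}" if "a < k" for a
      using Suc.prems that by (fastforce simp: inj_on_def)
    then have "t a $ g k = 0" if "a < k" for a
      using supp that by blast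
    then show ?thesis
      by (simp add: tk_def)
  qed
  have tk_rest: "cform X tk (axis (g k) 1 - tk) = 0"
    using orth_tk cform_hermitian[OF herm, of tk]
    by (simp add: tk_def cform_sum_right cform_scale_right)
  have tk_orth: "cform X tk (t a) = 0" if "a < k" for a
    using orth_tk[OF that] cform_hermitian[OF herm, of "t a" tk] by simp
  show ?case
    by (intro exI[of _ "t(k := tk)"])
      (auto simp: less_Suc_eq diag supp orth rest orth_tk tk_orth tk_supp tk_diag tk_rest)
qed

lemma matrix_vector_mult_axis: "(A::'a::semiring_1^'n^'m) *v axis k 1 = column k A"
  by (simp add: matrix_vector_mult_def column_def axis_def vec_eq_iff if_distrib cong: if_cong)

lemma congruence_entry: "(mat_adj T ** X ** T) $ a $ b = cform X (column a T) (column b T)"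
  by (subst cform_axis[symmetric]) (simp only: cform_congruence matrix_vector_mult_axis)

lemma det_upper_triangular_wrt:
  fixes A :: "'a::comm_ring_1^'n^'n" and idx :: "'n \<Rightarrow> nat"
  assumes inj: "inj idx" and upper: "\<And>i j. idx j < idx i \<Longrightarrow> A $ i $ j = 0"
  shows "det A = (\<Prod>i\<in>UNIV. A $ i $ i)"
proof -
  have "of_int (sign p) * (\<Prod>i\<in>UNIV. A $ i $ p i) = 0" if "p \<in> {p. p permutes UNIV} - {id}" for p
  proof -
    have p: "p permutes UNIV" "p \<noteq> id"
      using that by auto
    have "\<exists>i. idx (p i) < idx i"
    proof (rule ccontr)
      assume "\<not> ?thesis"
      then have le: "idx i \<le> idx (p i)" for i
        by (simp add: not_less)
      have "(\<Sum>i\<in>UNIV. idx i) = (\<Sum>i\<in>UNIV. idx (p i))"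
        using sum.permute[OF p(1), of idx] by (simp add: comp_def)
      from sum_mono_inv[OF this le] have "idx (p i) = idx i" for i
        by simp
      then have "p = id"
        using inj by (auto simp: inj_def)
      with p(2) show False ..
    qed
    then obtain i where "A $ i $ p i = 0"
      using upper by blast
    then have "(\<Prod>i\<in>UNIV. A $ i $ p i) = 0"
      by (intro prod_zero) auto
    then show ?thesis
      by simp
  qed
  then have "det A = (\<Sum>p\<in>{id}. of_int (sign p) * (\<Prod>i\<in>UNIV. A $ i $ p i))"
    unfolding det_def by (intro sum.mono_neutral_right) auto
  then show ?thesis
    by simp
qed

lemma pos_def_unit_triangular_congruence:
  fixes X :: "complex^'m^'m"
  assumes X: "pos_def X"
  obtains T where "det T = 1" and "\<And>a. T $ a $ a = 1"
    and "\<And>a b. a \<noteq> b \<Longrightarrow> (mat_adj T ** X ** T) $ a $ b = 0"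
    and "\<And>a. cform X (column a T) (axis a 1 - column a T) = 0"
proof -
  let ?n = "CARD('m)"
  obtain g :: "nat \<Rightarrow> 'm" where g: "bij_betw g {..<?n} UNIV"
    using ex_bij_betw_nat_finite[of "UNIV :: 'm set"] by (auto simp: lessThan_atLeast0)
  obtain t where diag: "\<forall>a<?n. t a $ g a = 1"
    and supp: "\<forall>a<?n. \<forall>b. t a $ b \<noteq> 0 \<longrightarrow> b \<in> g ` {..a}"
    and orth: "\<forall>a<?n. \<forall>a'<?n. a \<noteq> a' \<longrightarrow> cform X (t a) (t a') = 0"
    and rest: "\<forall>a<?n. cform X (t a) (axis (g a) 1 - t a) = 0"
    using gram_schmidt[OF X bij_betw_imp_inj_on[OF g]] by (elim exE conjE)
  define idx where "idx = inv_into {..<?n} g"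
  have g_idx: "g (idx a) = a" for a
    using bij_betw_inv_into_right[OF g] by (simp add: idx_def)
  have idx_less: "idx a < ?n" for a
    using bij_betwE[OF bij_betw_inv_into[OF g]] by (simp add: idx_def)
  have idx_g: "idx (g a) = a" if "a < ?n" for a
    using g that by (simp add: idx_def bij_betw_inv_into_left)
  have inj: "inj idx"
    by (rule inj_on_inverseI[of _ g]) (rule g_idx)
  define T where "T = (\<chi> i j. t (idx j) $ i)"
  have col: "column j T = t (idx j)" for j
    by (simp add: column_def T_def vec_eq_iff)
  have T_diag: "T $ a $ a = 1" for a
  proof -
    have "t (idx a) $ g (idx a) = 1"
      using diag idx_less by blast
    then show ?thesis
      by (simp add: T_def g_idx)
  qed
  have "det T = (\<Prod>i\<in>UNIV. T $ i $ i)"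
  proof (rule det_upper_triangular_wrt[OF inj])
    fix i j assume "idx j < idx i"
    moreover have "idx i \<le> idx j" if "i \<in> g ` {..idx j}"
      using that idx_g idx_less[of j] by auto
    ultimately have "i \<notin> g ` {..idx j}"
      by linarith
    then show "T $ i $ j = 0"
      using supp idx_less by (auto simp: T_def)
  qed
  also have "\<dots> = 1"
    by (simp add: T_diag)
  finally have "det T = 1" .
  moreover have "(mat_adj T ** X ** T) $ a $ b = 0" if "a \<noteq> b" for a b
  proof -
    have "idx a \<noteq> idx b"
      using that g_idx by metis
    then show ?thesis
      using orth idx_less by (simp add: congruence_entry col)
  qed
  moreover have "cform X (column a T) (axis a 1 - column a T) = 0" for a
    using rest idx_less[of a] g_idx[of a] by (metis col)
  ultimately show thesis
    using that T_diag by blast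
qed

lemma det_unimodular_congruence: "det T = 1 \<Longrightarrow> det (mat_adj T ** X ** T) = det X"
  by (simp add: det_mul det_mat_adj)

lemma pos_def_det_factorization:
  fixes X :: "complex^'m^'m"
  assumes X: "pos_def X"
  obtains d :: "'m \<Rightarrow> real" where "det X = of_real (\<Prod>a\<in>UNIV. d a)" and "\<And>a. 0 < d a"
    and "\<And>a. d a \<le> Re (X $ a $ a)"
    and "(\<forall>a. d a = Re (X $ a $ a)) \<longrightarrow> (\<forall>a b. a \<noteq> b \<longrightarrow> X $ a $ b = 0)"
    and "\<And>a. \<exists>v. v $ a = 1 \<and> d a = Re (cform X v v)"
proof -
  obtain T where det_T: "det T = 1" and T_diag: "\<And>a. T $ a $ a = 1"
    and off_diag: "\<And>a b. a \<noteq> b \<Longrightarrow> (mat_adj T ** X ** T) $ a $ b = 0"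
    and rest: "\<And>a. cform X (column a T) (axis a 1 - column a T) = 0"
    using pos_def_unit_triangular_congruence[OF X] by blast
  have herm: "mat_adj X = X" and pos: "\<And>x. x \<noteq> 0 \<Longrightarrow> 0 < Re (cform X x x)"
    using X by (auto simp: pos_def_def)
  \<comment> \<open>the pivots of the factorisation \<open>X = L D L\<^sup>H\<close> with \<open>L\<close> the inverse of \<open>T\<^sup>H\<close>\<close>
  define d where "d a = Re (cform X (column a T) (column a T))" for a
  have "det X = det (mat_adj T ** X ** T)"
    by (simp add: det_unimodular_congruence det_T)
  also have "\<dots> = (\<Prod>a\<in>UNIV. (mat_adj T ** X ** T) $ a $ a)"
    using off_diag by (intro det_diagonal) auto
  also have "\<dots> = of_real (\<Prod>a\<in>UNIV. d a)"
    by (simp add: congruence_entry d_def cform_self_real[OF herm])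
  finally have det_X: "det X = of_real (\<Prod>a\<in>UNIV. d a)" .
  have d_pos: "0 < d a" for a
  proof -
    have "column a T $ a = 1"
      using T_diag by (simp add: column_def)
    then have "column a T \<noteq> 0"
      by auto
    then show ?thesis
      unfolding d_def by (rule pos)
  qed
  define w where "w a = axis a 1 - column a T" for a
  have diag_split: "Re (X $ a $ a) = d a + Re (cform X (w a) (w a))" for a
  proof -
    have "X $ a $ a = cform X (column a T + w a) (column a T + w a)"
      by (simp add: w_def cform_axis)
    also have "\<dots> = cform X (column a T) (column a T) + cform X (w a) (w a)"
      using rest[of a] by (intro cform_add_orthogonal[OF herm]) (simp add: w_def)
    finally show ?thesis
      by (simp add: d_def)
  qed
  have w_nonneg: "0 \<le> Re (cform X (w a) (w a))" for a
    using pos[of "w a"] by (cases "w a = 0") (auto simp: cform_def)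
  have diagonal: "(\<forall>a. d a = Re (X $ a $ a)) \<longrightarrow> (\<forall>a b. a \<noteq> b \<longrightarrow> X $ a $ b = 0)"
  proof
    assume eq: "\<forall>a. d a = Re (X $ a $ a)"
    have "w a = 0" for a
      using eq diag_split[of a] pos[of "w a"] by auto
    then have "T = mat 1"
      by (simp add: w_def vec_eq_iff column_def axis_def mat_def)
    then show "\<forall>a b. a \<noteq> b \<longrightarrow> X $ a $ b = 0"
      using off_diag by simp
  qed
  show thesis
  proof (rule that[OF det_X d_pos _ diagonal])
    show "d a \<le> Re (X $ a $ a)" for a
      using diag_split w_nonneg by simp
    show "\<exists>v. v $ a = 1 \<and> d a = Re (cform X v v)" for a
      using T_diag[of a] by (intro exI[of _ "column a T"]) (simp add: d_def column_def)
  qed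
qed

lemma pos_def_det_pos:
  fixes X :: "complex^'n^'n"
  assumes "pos_def X"
  shows "of_real (Re (det X)) = det X" and "0 < Re (det X)"
proof -
  obtain d :: "'n \<Rightarrow> real" where det_X: "det X = of_real (\<Prod>a\<in>UNIV. d a)"
    and pos: "\<And>a. 0 < d a"
    using pos_def_det_factorization[OF assms] by metis
  show "of_real (Re (det X)) = det X" and "0 < Re (det X)"
    using pos by (simp_all add: det_X prod_pos del: of_real_prod)
qed

lemma pos_def_hadamard:
  fixes X :: "complex^'n^'n"
  assumes "pos_def X"
  shows "Re (det X) \<le> (\<Prod>a\<in>UNIV. Re (X $ a $ a))"
    and "a \<noteq> b \<Longrightarrow> X $ a $ b \<noteq> 0 \<Longrightarrow> Re (det X) < (\<Prod>a\<in>UNIV. Re (X $ a $ a))"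
proof -
  obtain d :: "'n \<Rightarrow> real" where det_X: "det X = of_real (\<Prod>a\<in>UNIV. d a)"
    and pos: "\<And>a. 0 < d a" and le: "\<And>a. d a \<le> Re (X $ a $ a)"
    and eq: "(\<forall>a. d a = Re (X $ a $ a)) \<longrightarrow> (\<forall>a b. a \<noteq> b \<longrightarrow> X $ a $ b = 0)"
    using pos_def_det_factorization[OF assms] by metis
  show "Re (det X) \<le> (\<Prod>a\<in>UNIV. Re (X $ a $ a))"
    using pos le by (simp add: det_X prod_mono less_imp_le del: of_real_prod)
  assume "a \<noteq> b" and "X $ a $ b \<noteq> 0"
  then obtain c where "d c < Re (X $ c $ c)"
    using eq le by (meson order_less_le)
  then show "Re (det X) < (\<Prod>a\<in>UNIV. Re (X $ a $ a))"
    using pos le by (simp add: det_X del: of_real_prod)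
      (intro prod_mono_strict[of c]; auto intro: less_imp_le order_less_le_trans)
qed

lemma det_id_plus_psd_ge_1:
  fixes A :: "complex^'n^'n"
  assumes "cpsd A"
  shows "1 \<le> Re (det (mat 1 + A))"
proof -
  obtain d :: "'n \<Rightarrow> real" where det: "det (mat 1 + A) = of_real (\<Prod>a\<in>UNIV. d a)"
    and quad: "\<And>a. \<exists>v. v $ a = 1 \<and> d a = Re (cform (mat 1 + A) v v)"
    using pos_def_det_factorization[OF pos_def_id_plus_psd[OF assms]] by metis
  have "1 \<le> d a" for a
  proof -
    obtain v where v: "v $ a = 1" "d a = Re (cform (mat 1 + A) v v)"
      using quad by blast
    have "1 = (cmod (v $ a))\<^sup>2"
      using v by simp
    also have "\<dots> \<le> (\<Sum>i\<in>UNIV. (cmod (v $ i))\<^sup>2)"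
      by (rule member_le_sum) auto
    also have "\<dots> \<le> d a"
      using assms v by (simp add: cform_mat_add Re_cform_id cpsd_iff_cform)
    finally show ?thesis .
  qed
  then show ?thesis
    by (simp add: det prod_ge_1 del: of_real_prod)
qed

section \<open>Strict log-concavity of the determinant\<close>

lemma congruence_cancel:
  fixes T X Y :: "complex^'n^'n"
  assumes "invertible T" and "mat_adj T ** X ** T = mat_adj T ** Y ** T"
  shows "X = Y"
proof (rule mat_eq_if_cform_eq)
  fix x y
  obtain S where "T ** S = mat 1"
    using assms(1) invertible_def by blast
  then have TS: "T *v (S *v z) = z" for z
    by (simp add: matrix_vector_mul_assoc)
  have "cform X x y = cform (mat_adj T ** X ** T) (S *v x) (S *v y)"
    by (simp add: cform_congruence TS)
  also have "\<dots> = cform Y x y"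
    by (simp add: assms(2) cform_congruence TS)
  finally show "cform X x y = cform Y x y" .
qed

lemma prod_mult_le_prod_mean_square:
  fixes p q :: "'n::finite \<Rightarrow> real"
  assumes "\<And>a. 0 < p a" and "\<And>a. 0 < q a"
  shows "(\<Prod>a\<in>UNIV. p a) * (\<Prod>a\<in>UNIV. q a) \<le> (\<Prod>a\<in>UNIV. (p a + q a) / 2)\<^sup>2"
    and "p c \<noteq> q c \<Longrightarrow>
      (\<Prod>a\<in>UNIV. p a) * (\<Prod>a\<in>UNIV. q a) < (\<Prod>a\<in>UNIV. (p a + q a) / 2)\<^sup>2"
proof -
  have amgm: "p a * q a \<le> ((p a + q a) / 2)\<^sup>2" for a
    using sum_squares_ge_zero[of "p a - q a" 0] by (simp add: power2_eq_square field_simps)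
  have amgm_strict: "p a * q a < ((p a + q a) / 2)\<^sup>2" if "p a \<noteq> q a" for a
  proof -
    have "0 < (p a - q a)\<^sup>2"
      using that by simp
    then show ?thesis
      by (simp add: power2_eq_square field_simps)
  qed
  have prods: "(\<Prod>a\<in>UNIV. p a) * (\<Prod>a\<in>UNIV. q a) = (\<Prod>a\<in>UNIV. p a * q a)"
    "(\<Prod>a\<in>UNIV. (p a + q a) / 2)\<^sup>2 = (\<Prod>a\<in>UNIV. ((p a + q a) / 2)\<^sup>2)"
    by (simp_all add: prod.distrib power_mult_distrib flip: prod_power_distrib)
  show "(\<Prod>a\<in>UNIV. p a) * (\<Prod>a\<in>UNIV. q a) \<le> (\<Prod>a\<in>UNIV. (p a + q a) / 2)\<^sup>2"
    unfolding prods using assms amgm by (intro prod_mono) (simp add: less_imp_le)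
  show "p c \<noteq> q c \<Longrightarrow>
      (\<Prod>a\<in>UNIV. p a) * (\<Prod>a\<in>UNIV. q a) < (\<Prod>a\<in>UNIV. (p a + q a) / 2)\<^sup>2"
    unfolding prods using assms amgm amgm_strict
    by (intro prod_mono_strict[of c]) (auto simp: less_imp_le, metis add_pos_pos less_irrefl)
qed

lemma hermitian_neq_cases:
  fixes P Q :: "complex^'n^'n"
  assumes "mat_adj P = P" and "mat_adj Q = Q" and "P \<noteq> Q"
  obtains a b where "a \<noteq> b" "P $ a $ b \<noteq> 0"
    | a b where "a \<noteq> b" "Q $ a $ b \<noteq> 0"
    | c where "Re (P $ c $ c) \<noteq> Re (Q $ c $ c)"
proof -
  note cases = that
  have "P $ a $ b = Q $ a $ b" if "\<not> thesis" for a b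
  proof (cases "a = b")
    case True
    then show ?thesis
      using cases(3) that hermitian_diag_real[OF assms(1), of a] hermitian_diag_real[OF assms(2), of a] by metis
  next
    case False
    then show ?thesis
      using cases(1,2) that by metis
  qed
  with \<open>P \<noteq> Q\<close> show thesis
    by (auto simp: vec_eq_iff)
qed

lemma det_midpoint_strict_diagonal:
  fixes P Q :: "complex^'n^'n"
  assumes P: "pos_def P" and Q: "pos_def Q" and "P \<noteq> Q"
    and diagonal: "\<And>a b. a \<noteq> b \<Longrightarrow> ((1/2) *\<^sub>R (P + Q)) $ a $ b = 0"
  shows "Re (det P) * Re (det Q) < (Re (det ((1/2) *\<^sub>R (P + Q))))\<^sup>2"
proof -
  define p where "p a = Re (P $ a $ a)" for a
  define q where "q a = Re (Q $ a $ a)" for a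
  have p_pos: "0 < p a" and q_pos: "0 < q a" for a
    unfolding p_def q_def using P Q by (simp_all add: pos_def_diag_pos)
  have herm: "mat_adj P = P" "mat_adj Q = Q"
    using P Q by (simp_all add: pos_def_def)
  have "det ((1/2) *\<^sub>R (P + Q)) = (\<Prod>a\<in>UNIV. ((1/2) *\<^sub>R (P + Q)) $ a $ a)"
    using diagonal by (intro det_diagonal) auto
  also have "\<dots> = of_real (\<Prod>a\<in>UNIV. (p a + q a) / 2)"
    unfolding vector_scaleR_component vector_add_component p_def q_def
    by (simp add: scaleR_conv_of_real hermitian_diag_real[OF herm(1)] hermitian_diag_real[OF herm(2)])
  finally have det_R: "Re (det ((1/2) *\<^sub>R (P + Q))) = (\<Prod>a\<in>UNIV. (p a + q a) / 2)"
    by (simp del: of_real_prod)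
  have le_P: "Re (det P) \<le> (\<Prod>a\<in>UNIV. p a)" and le_Q: "Re (det Q) \<le> (\<Prod>a\<in>UNIV. q a)"
    unfolding p_def q_def using P Q by (simp_all add: pos_def_hadamard)
  have pos_P: "0 < Re (det P)" and pos_Q: "0 < Re (det Q)"
    using P Q by (simp_all add: pos_def_det_pos)
  have "Re (det P) * Re (det Q) < (\<Prod>a\<in>UNIV. p a) * (\<Prod>a\<in>UNIV. q a) \<or>
    (\<Prod>a\<in>UNIV. p a) * (\<Prod>a\<in>UNIV. q a) < (\<Prod>a\<in>UNIV. (p a + q a) / 2)\<^sup>2"
  proof (rule hermitian_neq_cases[OF herm \<open>P \<noteq> Q\<close>])
    fix a b assume "a \<noteq> b" "P $ a $ b \<noteq> 0"
    then have "Re (det P) < (\<Prod>a\<in>UNIV. p a)"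
      unfolding p_def by (rule pos_def_hadamard(2)[OF P])
    then have "Re (det P) * Re (det Q) < (\<Prod>a\<in>UNIV. p a) * Re (det Q)"
      using pos_Q by (rule mult_strict_right_mono)
    also have "\<dots> \<le> (\<Prod>a\<in>UNIV. p a) * (\<Prod>a\<in>UNIV. q a)"
      using le_Q p_pos by (simp add: prod_pos less_imp_le)
    finally show ?thesis ..
  next
    fix a b assume "a \<noteq> b" "Q $ a $ b \<noteq> 0"
    then have "Re (det Q) < (\<Prod>a\<in>UNIV. q a)"
      unfolding q_def by (rule pos_def_hadamard(2)[OF Q])
    then have "Re (det P) * Re (det Q) < Re (det P) * (\<Prod>a\<in>UNIV. q a)"
      using pos_P by (rule mult_strict_left_mono)
    also have "\<dots> \<le> (\<Prod>a\<in>UNIV. p a) * (\<Prod>a\<in>UNIV. q a)"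
      using le_P q_pos by (simp add: prod_pos less_imp_le mult_right_mono)
    finally show ?thesis ..
  next
    fix c assume "Re (P $ c $ c) \<noteq> Re (Q $ c $ c)"
    then show ?thesis
      using prod_mult_le_prod_mean_square(2)[of p q, OF p_pos q_pos] by (simp add: p_def q_def)
  qed
  moreover have "Re (det P) * Re (det Q) \<le> (\<Prod>a\<in>UNIV. p a) * (\<Prod>a\<in>UNIV. q a)"
    using le_P le_Q pos_P pos_Q by (intro mult_mono) auto
  moreover note prod_mult_le_prod_mean_square(1)[of p q, OF p_pos q_pos]
  ultimately show ?thesis
    unfolding det_R by linarith
qed

lemma det_midpoint_strict:
  fixes P Q :: "complex^'n^'n"
  assumes P: "pos_def P" and Q: "pos_def Q" and "P \<noteq> Q"
  shows "Re (det P) * Re (det Q) < (Re (det ((1/2) *\<^sub>R (P + Q))))\<^sup>2"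
proof -
  define R where "R = (1/2) *\<^sub>R (P + Q)"
  have "pos_def R"
    unfolding R_def using P Q by (rule pos_def_midpoint)
  then obtain T where det_T: "det T = 1"
    and diagonal: "\<And>a b. a \<noteq> b \<Longrightarrow> (mat_adj T ** R ** T) $ a $ b = 0"
    by (rule pos_def_unit_triangular_congruence) (rule that)
  have T: "invertible T"
    using det_T by (simp add: invertible_det_nz)
  define P' where "P' = mat_adj T ** P ** T"
  define Q' where "Q' = mat_adj T ** Q ** T"
  have R': "mat_adj T ** R ** T = (1/2) *\<^sub>R (P' + Q')"
    by (rule mat_eq_if_cform_eq) (simp add: R_def P'_def Q'_def cform_congruence cform_mat_add cform_mat_scaleR)
  have P': "pos_def P'" and Q': "pos_def Q'"
    using P Q T by (simp_all add: P'_def Q'_def pos_def_congruence)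
  have "P' \<noteq> Q'"
    using \<open>P \<noteq> Q\<close> congruence_cancel[OF T] by (auto simp: P'_def Q'_def)
  then have "Re (det P') * Re (det Q') < (Re (det ((1/2) *\<^sub>R (P' + Q'))))\<^sup>2"
    using diagonal unfolding R' by (rule det_midpoint_strict_diagonal[OF P' Q'])
  then show ?thesis
    unfolding R'[symmetric] by (simp add: P'_def Q'_def R_def det_unimodular_congruence[OF det_T])
qed

section \<open>The channel rate\<close>

lemma cpsd_scaled_congruence:
  fixes H :: "complex^'n^'m" and Q :: "complex^'n^'n"
  assumes "cpsd Q" and "0 \<le> c"
  shows "cpsd (c *\<^sub>R (H ** Q ** mat_adj H))"
proof -
  have "cform (H ** Q ** mat_adj H) x x = cform Q (mat_adj H *v x) (mat_adj H *v x)" for x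
    using cform_congruence[of "mat_adj H" Q x x] by simp
  then show ?thesis
    using assms unfolding cpsd_iff_cform
    by (simp add: mat_adj_scaleR mat_adj_mult matrix_mul_assoc cform_mat_scaleR)
qed

lemma cpsd_diag_nonneg: "cpsd A \<Longrightarrow> 0 \<le> Re (A $ a $ a)"
  unfolding cpsd_iff_cform by (metis cform_axis)

lemma ln_det_id_plus_psd_le_trace:
  fixes A :: "complex^'n^'n"
  assumes A: "cpsd A"
  shows "ln (Re (det (mat 1 + A))) \<le> (\<Sum>a\<in>UNIV. Re (A $ a $ a))"
proof -
  have diag_pos: "0 < 1 + Re (A $ a $ a)" for a
    using cpsd_diag_nonneg[OF A, of a] by simp
  have "Re (det (mat 1 + A)) \<le> (\<Prod>a\<in>UNIV. 1 + Re (A $ a $ a))"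
    using pos_def_hadamard(1)[OF pos_def_id_plus_psd[OF A]] by (simp add: mat_def)
  then have "ln (Re (det (mat 1 + A))) \<le> ln (\<Prod>a\<in>UNIV. 1 + Re (A $ a $ a))"
    using pos_def_det_pos(2)[OF pos_def_id_plus_psd[OF A]] by simp
  also have "\<dots> = (\<Sum>a\<in>UNIV. ln (1 + Re (A $ a $ a)))"
    using diag_pos by (simp add: ln_prod less_imp_neq[symmetric])
  also have "\<dots> \<le> (\<Sum>a\<in>UNIV. Re (A $ a $ a))"
    using diag_pos by (intro sum_mono) (simp add: ln_add_one_self_le_self cpsd_diag_nonneg[OF A])
  finally show ?thesis .
qed

lemma cmod_entry_le_norm: "cmod (H $ i $ j) \<le> norm H"
  using Finite_Cartesian_Product.norm_nth_le[of "H $ i" j] Finite_Cartesian_Product.norm_nth_le[of H i]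
  by simp

lemma HQH_entry: "(H ** Q ** mat_adj H) $ a $ b = (\<Sum>k\<in>UNIV. \<Sum>l\<in>UNIV. H $ a $ k * Q $ k $ l * cnj (H $ b $ l))"
  by (simp add: matrix_matrix_mult_def mat_adj_def sum_distrib_right) (rule sum.swap)

lemma cmod_HQH_diag_le:
  "cmod ((H ** Q ** mat_adj H) $ a $ a) \<le> (\<Sum>k\<in>UNIV. \<Sum>l\<in>UNIV. cmod (Q $ k $ l)) * (norm H)\<^sup>2"
proof -
  have "cmod ((H ** Q ** mat_adj H) $ a $ a) \<le>
      (\<Sum>k\<in>UNIV. \<Sum>l\<in>UNIV. cmod (H $ a $ k * Q $ k $ l * cnj (H $ a $ l)))"
    unfolding HQH_entry by (rule order_trans[OF norm_sum sum_mono[OF norm_sum]])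
  also have "\<dots> \<le> (\<Sum>k\<in>UNIV. \<Sum>l\<in>UNIV. cmod (Q $ k $ l) * (norm H)\<^sup>2)"
  proof (intro sum_mono)
    fix k l
    have "cmod (H $ a $ k * Q $ k $ l * cnj (H $ a $ l)) =
        cmod (Q $ k $ l) * (cmod (H $ a $ k) * cmod (H $ a $ l))"
      by (simp add: norm_mult)
    also have "\<dots> \<le> cmod (Q $ k $ l) * (norm H * norm H)"
      by (intro mult_left_mono mult_mono cmod_entry_le_norm) auto
    finally show "cmod (H $ a $ k * Q $ k $ l * cnj (H $ a $ l)) \<le> cmod (Q $ k $ l) * (norm H)\<^sup>2"
      by (simp add: power2_eq_square)
  qed
  also have "\<dots> = (\<Sum>k\<in>UNIV. \<Sum>l\<in>UNIV. cmod (Q $ k $ l)) * (norm H)\<^sup>2"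
    by (simp add: sum_distrib_right)
  finally show ?thesis .
qed

definition channel_rate :: "real \<Rightarrow> complex^'n^'n \<Rightarrow> complex^'n^'m \<Rightarrow> real" where
  "channel_rate s Q H = ln (Re (det (mat 1 + (1/s) *\<^sub>R (H ** Q ** mat_adj H))))"

lemma capacity_eq_integral_channel_rate: "capacity \<mu> s Q = (\<integral>H. channel_rate s Q H \<partial>\<mu>)"
  by (simp add: capacity_def channel_rate_def)

lemma channel_rate_nonneg: "cpsd Q \<Longrightarrow> 0 < s \<Longrightarrow> 0 \<le> channel_rate s Q H"
  unfolding channel_rate_def by (simp add: det_id_plus_psd_ge_1 cpsd_scaled_congruence)

lemma channel_rate_le:
  fixes H :: "complex^'n^'m" and Q :: "complex^'n^'n"
  assumes Q: "cpsd Q" and s: "0 < s"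
  shows "channel_rate s Q H \<le> CARD('m) * (\<Sum>k\<in>UNIV. \<Sum>l\<in>UNIV. cmod (Q $ k $ l)) / s * (norm H)\<^sup>2"
proof -
  let ?A = "(1/s) *\<^sub>R (H ** Q ** mat_adj H)"
  have "channel_rate s Q H \<le> (\<Sum>a\<in>UNIV. Re (?A $ a $ a))"
    unfolding channel_rate_def using Q s
    by (intro ln_det_id_plus_psd_le_trace cpsd_scaled_congruence) auto
  also have "\<dots> \<le> (\<Sum>a\<in>(UNIV::'m set). (\<Sum>k\<in>UNIV. \<Sum>l\<in>UNIV. cmod (Q $ k $ l)) / s * (norm H)\<^sup>2)"
  proof (rule sum_mono)
    fix a
    have "Re (?A $ a $ a) = Re ((H ** Q ** mat_adj H) $ a $ a) / s"
      by simp
    also have "\<dots> \<le> cmod ((H ** Q ** mat_adj H) $ a $ a) / s"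
      using s by (intro divide_right_mono complex_Re_le_cmod) auto
    also have "\<dots> \<le> (\<Sum>k\<in>UNIV. \<Sum>l\<in>UNIV. cmod (Q $ k $ l)) * (norm H)\<^sup>2 / s"
      using s by (intro divide_right_mono cmod_HQH_diag_le) auto
    finally show "Re (?A $ a $ a) \<le> (\<Sum>k\<in>UNIV. \<Sum>l\<in>UNIV. cmod (Q $ k $ l)) / s * (norm H)\<^sup>2"
      by simp
  qed
  also have "\<dots> = CARD('m) * (\<Sum>k\<in>UNIV. \<Sum>l\<in>UNIV. cmod (Q $ k $ l)) / s * (norm H)\<^sup>2"
    by simp
  finally show ?thesis .
qed

lemma borel_measurable_channel_rate:
  fixes Q :: "complex^'n^'n"
  shows "(channel_rate s Q :: complex^'n^'m \<Rightarrow> real) \<in> borel_measurable borel"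
proof -
  have "continuous_on UNIV (\<lambda>H::complex^'n^'m. det (mat 1 + (1/s) *\<^sub>R (H ** Q ** mat_adj H)))"
    unfolding det_def vector_add_component vector_scaleR_component HQH_entry
    by (intro continuous_intros)
  then have [measurable]:
    "(\<lambda>H::complex^'n^'m. det (mat 1 + (1/s) *\<^sub>R (H ** Q ** mat_adj H))) \<in> borel_measurable borel"
    by (rule borel_measurable_continuous_onI)
  show ?thesis
    unfolding channel_rate_def by measurable
qed

lemma id_plus_congruence_midpoint:
  fixes H :: "complex^'n^'m"
  shows "mat 1 + c *\<^sub>R (H ** ((1/2) *\<^sub>R (Q1 + Q2)) ** mat_adj H) =
    (1/2) *\<^sub>R ((mat 1 + c *\<^sub>R (H ** Q1 ** mat_adj H)) + (mat 1 + c *\<^sub>R (H ** Q2 ** mat_adj H)))"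
proof (rule mat_eq_if_cform_eq)
  fix x y
  have "cform (H ** X ** mat_adj H) x y = cform X (mat_adj H *v x) (mat_adj H *v y)" for X
    using cform_congruence[of "mat_adj H" X x y] by simp
  then show "cform (mat 1 + c *\<^sub>R (H ** ((1/2) *\<^sub>R (Q1 + Q2)) ** mat_adj H)) x y =
    cform ((1/2) *\<^sub>R ((mat 1 + c *\<^sub>R (H ** Q1 ** mat_adj H)) + (mat 1 + c *\<^sub>R (H ** Q2 ** mat_adj H)))) x y"
    by (simp only: cform_mat_add cform_mat_scaleR) (simp add: algebra_simps)
qed

lemma channel_rate_midpoint:
  fixes H :: "complex^'n^'m" and Q1 Q2 :: "complex^'n^'n"
  assumes Q1: "cpsd Q1" and Q2: "cpsd Q2" and s: "0 < s"
  shows "H ** Q1 ** mat_adj H \<noteq> H ** Q2 ** mat_adj H \<Longrightarrow>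
      channel_rate s Q1 H + channel_rate s Q2 H < 2 * channel_rate s ((1/2) *\<^sub>R (Q1 + Q2)) H"
    and "channel_rate s Q1 H + channel_rate s Q2 H \<le> 2 * channel_rate s ((1/2) *\<^sub>R (Q1 + Q2)) H"
proof -
  define P1 where "P1 = mat 1 + (1/s) *\<^sub>R (H ** Q1 ** mat_adj H)"
  define P2 where "P2 = mat 1 + (1/s) *\<^sub>R (H ** Q2 ** mat_adj H)"
  have P1: "pos_def P1" and P2: "pos_def P2"
    unfolding P1_def P2_def using Q1 Q2 s by (simp_all add: pos_def_id_plus_psd cpsd_scaled_congruence)
  have rates: "channel_rate s Q1 H = ln (Re (det P1))" "channel_rate s Q2 H = ln (Re (det P2))"
    "channel_rate s ((1/2) *\<^sub>R (Q1 + Q2)) H = ln (Re (det ((1/2) *\<^sub>R (P1 + P2))))"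
    by (simp_all add: channel_rate_def P1_def P2_def id_plus_congruence_midpoint)
  show strict: "channel_rate s Q1 H + channel_rate s Q2 H < 2 * channel_rate s ((1/2) *\<^sub>R (Q1 + Q2)) H"
    if "H ** Q1 ** mat_adj H \<noteq> H ** Q2 ** mat_adj H"
  proof -
    have "P1 \<noteq> P2"
      using that s by (simp add: P1_def P2_def)
    then have "Re (det P1) * Re (det P2) < (Re (det ((1/2) *\<^sub>R (P1 + P2))))\<^sup>2"
      by (rule det_midpoint_strict[OF P1 P2])
    moreover have "0 < Re (det P1)" "0 < Re (det P2)" "0 < Re (det ((1/2) *\<^sub>R (P1 + P2)))"
      using P1 P2 pos_def_midpoint[OF P1 P2] by (simp_all add: pos_def_det_pos)
    ultimately have "ln (Re (det P1) * Re (det P2)) < ln ((Re (det ((1/2) *\<^sub>R (P1 + P2))))\<^sup>2)"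
      by simp
    then show ?thesis
      unfolding rates using \<open>0 < Re (det P1)\<close> \<open>0 < Re (det P2)\<close> \<open>0 < Re (det ((1/2) *\<^sub>R (P1 + P2)))\<close>
      by (simp add: ln_mult ln_realpow)
  qed
  show "channel_rate s Q1 H + channel_rate s Q2 H \<le> 2 * channel_rate s ((1/2) *\<^sub>R (Q1 + Q2)) H"
  proof (cases "H ** Q1 ** mat_adj H = H ** Q2 ** mat_adj H")
    case True
    then have "P1 = P2"
      by (simp add: P1_def P2_def)
    then show ?thesis
      unfolding rates by (simp flip: scaleR_2)
  qed (use strict in auto)
qed

section \<open>Integrability under the Gaussian law\<close>

lemma integrable_square_if_gaussian_char:
  fixes X :: "'a \<Rightarrow> real"
  assumes "prob_space \<mu>" and X: "X \<in> borel_measurable \<mu>" and "0 \<le> v"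
    and char: "\<And>t. (\<integral>x. iexp (t * X x) \<partial>\<mu>) = exp (- t\<^sup>2 * v)"
  shows "integrable \<mu> (\<lambda>x. (X x)\<^sup>2)"
proof -
  interpret prob_space \<mu> by fact
  define \<sigma> where "\<sigma> = sqrt (2 * v)"
  define N where "N = distr std_normal_distribution borel (\<lambda>x. \<sigma> * x)"
  have char_N: "char N t = exp (- t\<^sup>2 * v)" for t
  proof -
    have "char N t = char std_normal_distribution (t * \<sigma>)"
      unfolding char_def N_def by (subst integral_distr) (auto simp: mult_ac)
    also have "\<dots> = exp (- t\<^sup>2 * v)"
      using \<open>0 \<le> v\<close> by (simp add: char_std_normal_distribution \<sigma>_def power_mult_distrib)
    finally show ?thesis .
  qed
  have "distr \<mu> borel X = N"
  proof (rule Levy_uniqueness)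
    show "real_distribution (distr \<mu> borel X)"
      using X by (rule real_distribution_distr)
    show "real_distribution N"
    proof -
      interpret std_normal: real_distribution std_normal_distribution
        by (rule real_dist_normal_dist)
      show ?thesis
        unfolding N_def by (rule std_normal.real_distribution_distr) simp
    qed
    have "char (distr \<mu> borel X) t = exp (- t\<^sup>2 * v)" for t
      unfolding char_def using X char by (subst integral_distr) auto
    then show "char (distr \<mu> borel X) = char N"
      by (simp add: fun_eq_iff char_N)
  qed
  moreover have "integrable N (\<lambda>x. x\<^sup>2)"
    using integrable_std_normal_distribution_moment[of 2]
    by (simp add: N_def integrable_distr_eq power_mult_distrib)
  ultimately have "integrable (distr \<mu> borel X) (\<lambda>x. x\<^sup>2)"
    by simp
  then show ?thesis
    using X by (subst (asm) integrable_distr_eq) auto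
qed

lemma cscg_law_entry_char:
  fixes \<mu> :: "(complex^'n^'m) measure"
  assumes "cscg_law \<mu> S"
  shows "(\<integral>H. exp (\<i> * of_real (Re (cnj c * H $ i $ j))) \<partial>\<mu>) = exp (- (cnj c * S (i, j) (i, j) * c) / 4)"
proof -
  let ?a = "axis i (axis j c) :: complex^'n^'m"
  have "cnj (?a $ k $ l) * H $ k $ l = (if l = j then if k = i then cnj c * H $ k $ l else 0 else 0)"
    for H :: "complex^'n^'m" and k l
    by (simp add: axis_def)
  then have linear: "(\<Sum>k\<in>UNIV. \<Sum>l\<in>UNIV. cnj (?a $ k $ l) * H $ k $ l) = cnj c * H $ i $ j"
    for H :: "complex^'n^'m"
    by simp
  have "cnj (?a $ fst k $ snd k) * S k l * ?a $ fst l $ snd l =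
      (if l = (i, j) then if k = (i, j) then cnj c * S k l * c else 0 else 0)" for k l
    by (cases k; cases l) (simp add: axis_def)
  then have quadratic: "(\<Sum>k\<in>UNIV. \<Sum>l\<in>UNIV. cnj (?a $ fst k $ snd k) * S k l * ?a $ fst l $ snd l) =
      cnj c * S (i, j) (i, j) * c"
    by simp
  have "\<forall>a::complex^'n^'m. (\<integral>H. exp (\<i> * of_real (Re (\<Sum>i\<in>UNIV. \<Sum>j\<in>UNIV. cnj (a $ i $ j) * H $ i $ j))) \<partial>\<mu>)
      = exp (- (\<Sum>k\<in>UNIV. \<Sum>l\<in>UNIV. cnj (a $ fst k $ snd k) * S k l * a $ fst l $ snd l) / 4)"
    using assms by (simp add: cscg_law_def)
  from this[rule_format, of ?a] show ?thesis
    by (simp only: linear quadratic)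
qed

lemma cscg_law_integrable_square:
  fixes \<mu> :: "(complex^'n^'m) measure"
  assumes cov: "cov_psd S" and law: "cscg_law \<mu> S"
  shows "integrable \<mu> (\<lambda>H. (Re (cnj c * H $ i $ j))\<^sup>2)"
proof -
  define s where "s = S (i, j) (i, j)"
  have "cnj s = s"
    using cov unfolding cov_psd_def s_def by (elim conjE allE) (erule sym)
  then have s_real: "of_real (Re s) = s"
    by (simp add: Reals_cnj_iff)
  have "0 \<le> Re (\<Sum>k\<in>UNIV. \<Sum>l\<in>UNIV. cnj (of_bool (k = (i, j))) * S k l * of_bool (l = (i, j)))"
    using cov unfolding cov_psd_def by (elim conjE allE)
  moreover have "cnj (of_bool (k = (i, j))) * S k l * of_bool (l = (i, j)) =
      (if l = (i, j) then if k = (i, j) then S k l else 0 else 0)" for k l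
    by simp
  ultimately have s_nonneg: "0 \<le> Re s"
    by (simp add: s_def)
  have sets: "sets \<mu> = sets borel" and "prob_space \<mu>"
    using law by (simp_all add: cscg_law_def)
  show ?thesis
  proof (rule integrable_square_if_gaussian_char)
    show "prob_space \<mu>" by fact
    have "continuous_on UNIV (\<lambda>H::complex^'n^'m. Re (cnj c * H $ i $ j))"
      by (intro continuous_intros)
    then show "(\<lambda>H. Re (cnj c * H $ i $ j)) \<in> borel_measurable \<mu>"
      using sets by (simp add: borel_measurable_continuous_onI cong: measurable_cong_sets)
    show "0 \<le> (cmod c)\<^sup>2 * Re s / 4"
      using s_nonneg by simp
    fix t :: real
    have "(\<integral>H. iexp (t * Re (cnj c * H $ i $ j)) \<partial>\<mu>) =
        (\<integral>H. exp (\<i> * of_real (Re (cnj (of_real t * c) * H $ i $ j))) \<partial>\<mu>)"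
      by (simp add: mult.assoc)
    also have "\<dots> = exp (- (cnj (of_real t * c) * s * (of_real t * c)) / 4)"
      unfolding s_def by (rule cscg_law_entry_char[OF law])
    also have "cnj (of_real t * c) * s * (of_real t * c) = of_real (t\<^sup>2 * (cmod c)\<^sup>2 * Re s)"
      using complex_norm_square[of c]
      by (subst s_real[symmetric]) (simp add: power2_eq_square mult_ac)
    also have "exp (- complex_of_real (t\<^sup>2 * (cmod c)\<^sup>2 * Re s) / 4) =
        complex_of_real (exp (- t\<^sup>2 * ((cmod c)\<^sup>2 * Re s / 4)))"
      by (simp add: mult.assoc flip: exp_of_real)
    finally show "(\<integral>H. iexp (t * Re (cnj c * H $ i $ j)) \<partial>\<mu>) = exp (- t\<^sup>2 * ((cmod c)\<^sup>2 * Re s / 4))" .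
  qed
qed

lemma power2_norm_matrix:
  "(norm (H::complex^'n^'m))\<^sup>2 = (\<Sum>i\<in>UNIV. \<Sum>j\<in>UNIV. (Re (H $ i $ j))\<^sup>2 + (Im (H $ i $ j))\<^sup>2)"
  by (simp add: norm_vec_def L2_set_def cmod_power2 sum_nonneg)

lemma cscg_law_integrable_norm_square:
  fixes \<mu> :: "(complex^'n^'m) measure"
  assumes "cov_psd S" and "cscg_law \<mu> S"
  shows "integrable \<mu> (\<lambda>H. (norm H)\<^sup>2)"
proof -
  have "Im z = Re (cnj \<i> * z)" for z
    by simp
  then show ?thesis
    unfolding power2_norm_matrix
    using cscg_law_integrable_square[OF assms, of 1] cscg_law_integrable_square[OF assms, of \<i>]
    by auto
qed

lemma integrable_channel_rate:
  fixes \<mu> :: "(complex^'n^'m) measure" and Q :: "complex^'n^'n"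
  assumes cov: "cov_psd S" and law: "cscg_law \<mu> S" and Q: "cpsd Q" and s: "0 < s"
  shows "integrable \<mu> (channel_rate s Q)"
proof (rule Bochner_Integration.integrable_bound)
  define K where "K = CARD('m) * (\<Sum>k\<in>UNIV. \<Sum>l\<in>UNIV. cmod (Q $ k $ l)) / s"
  show "integrable \<mu> (\<lambda>H. K * (norm H)\<^sup>2)"
    using cscg_law_integrable_norm_square[OF cov law] by simp
  have "sets \<mu> = sets borel"
    using law by (simp add: cscg_law_def)
  then show "channel_rate s Q \<in> borel_measurable \<mu>"
    using borel_measurable_channel_rate by (simp cong: measurable_cong_sets)
  show "AE H in \<mu>. norm (channel_rate s Q H) \<le> norm (K * (norm H)\<^sup>2)"
  proof (rule AE_I2)
    fix H :: "complex^'n^'m"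
    have "norm (channel_rate s Q H) = channel_rate s Q H"
      using channel_rate_nonneg[OF Q s, of H] by simp
    also have "\<dots> \<le> K * (norm H)\<^sup>2"
      unfolding K_def by (rule channel_rate_le[OF Q s])
    finally show "norm (channel_rate s Q H) \<le> norm (K * (norm H)\<^sup>2)"
      by simp
  qed
qed

section \<open>Capacity-achieving covariances\<close>

lemma cpsd_midpoint: "cpsd Q1 \<Longrightarrow> cpsd Q2 \<Longrightarrow> cpsd ((1/2) *\<^sub>R (Q1 + Q2))"
  by (simp add: cpsd_iff_cform mat_adj_scaleR mat_adj_add cform_mat_scaleR cform_mat_add)

lemma Re_mtrace_midpoint: "Re (mtrace ((1/2) *\<^sub>R (Q1 + Q2))) = (Re (mtrace Q1) + Re (mtrace Q2)) / 2"
  by (simp add: mtrace_def sum.distrib add_divide_distrib[symmetric] sum_divide_distrib[symmetric])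

lemma capacity_achieving_midpoint_le:
  assumes Q1: "capacity_achieving \<mu> s p Q1" and Q2: "capacity_achieving \<mu> s p Q2"
  shows "2 * capacity \<mu> s ((1/2) *\<^sub>R (Q1 + Q2)) \<le> capacity \<mu> s Q1 + capacity \<mu> s Q2"
proof -
  have "cpsd ((1/2) *\<^sub>R (Q1 + Q2))" and "Re (mtrace ((1/2) *\<^sub>R (Q1 + Q2))) \<le> p"
    using assms by (simp_all add: capacity_achieving_def cpsd_midpoint Re_mtrace_midpoint)
  then have "capacity \<mu> s ((1/2) *\<^sub>R (Q1 + Q2)) \<le> capacity \<mu> s Q1"
    using Q1 by (simp add: capacity_achieving_def)
  moreover have "capacity \<mu> s Q1 = capacity \<mu> s Q2"
    using Q1 Q2 by (simp add: capacity_achieving_def order_antisym)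
  ultimately show ?thesis
    by simp
qed

lemma AE_HQH_eq_if_capacity_midpoint_le:
  fixes \<mu> :: "(complex^'n^'m) measure" and Q1 Q2 :: "complex^'n^'n"
  assumes cov: "cov_psd S" and law: "cscg_law \<mu> S" and Q1: "cpsd Q1" and Q2: "cpsd Q2" and s: "0 < s"
    and gap: "2 * capacity \<mu> s ((1/2) *\<^sub>R (Q1 + Q2)) \<le> capacity \<mu> s Q1 + capacity \<mu> s Q2"
  shows "AE H in \<mu>. H ** Q1 ** mat_adj H = H ** Q2 ** mat_adj H"
proof -
  define Q3 where "Q3 = (1/2) *\<^sub>R (Q1 + Q2)"
  define g where "g H = 2 * channel_rate s Q3 H - channel_rate s Q1 H - channel_rate s Q2 H"
    for H :: "complex^'n^'m"
  have g_nonneg: "0 \<le> g H" for H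
    using channel_rate_midpoint(2)[OF Q1 Q2 s, of H] by (simp add: g_def Q3_def)
  have rates_integrable: "integrable \<mu> (channel_rate s Q1)" "integrable \<mu> (channel_rate s Q2)"
    "integrable \<mu> (channel_rate s Q3)"
    using Q1 Q2 cpsd_midpoint[OF Q1 Q2]
    by (simp_all add: Q3_def integrable_channel_rate[OF cov law _ s])
  then have "integrable \<mu> g"
    by (simp add: g_def[abs_def])
  moreover have "integral\<^sup>L \<mu> g = 0"
  proof -
    interpret prob_space \<mu>
      using law by (simp add: cscg_law_def)
    have "integral\<^sup>L \<mu> g = 2 * capacity \<mu> s Q3 - capacity \<mu> s Q1 - capacity \<mu> s Q2"
      using rates_integrable by (simp add: g_def[abs_def] capacity_eq_integral_channel_rate)
    then show ?thesis
      using gap integral_nonneg_AE[of g \<mu>] g_nonneg by (simp add: Q3_def)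
  qed
  ultimately have "AE H in \<mu>. g H = 0"
    using integral_nonneg_eq_0_iff_AE[of \<mu> g] g_nonneg by simp
  moreover have "H ** Q1 ** mat_adj H = H ** Q2 ** mat_adj H" if "g H = 0" for H
    using channel_rate_midpoint(1)[OF Q1 Q2 s, of H] that by (force simp: g_def Q3_def)
  ultimately show ?thesis
    by (rule eventually_mono)
qed

theorem lemma2:
  fixes \<Sigma> :: "'m::finite \<times> 'n::finite \<Rightarrow> 'm \<times> 'n \<Rightarrow> complex"
    and \<mu> :: "(complex^'n^'m) measure"
    and sn2 p :: real
    and Q1 Q2 :: "complex^'n^'n"
  assumes "sn2 > 0" and "p > 0"
    and "cov_psd \<Sigma>" and "cscg_law \<mu> \<Sigma>"
    and "capacity_achieving \<mu> sn2 p Q1" and "capacity_achieving \<mu> sn2 p Q2"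
    and "mtrace Q1 = complex_of_real p" and "mtrace Q2 = complex_of_real p"
  shows "AE H in \<mu>. H ** Q1 ** mat_adj H = H ** Q2 ** mat_adj H"
proof (rule AE_HQH_eq_if_capacity_midpoint_le)
  show "cov_psd \<Sigma>" and "cscg_law \<mu> \<Sigma>" and "0 < sn2"
    using assms by simp_all
  show "cpsd Q1" and "cpsd Q2"
    using assms(5,6) by (simp_all add: capacity_achieving_def)
  show "2 * capacity \<mu> sn2 ((1/2) *\<^sub>R (Q1 + Q2)) \<le> capacity \<mu> sn2 Q1 + capacity \<mu> sn2 Q2"
    using assms(5,6) by (rule capacity_achieving_midpoint_le)
qed

end
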